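(* Let $\lambda\ge0$ and $1\le n\le\lambda+1$ be integers, and let $I_n$ be the set of sequences $(k_0,\ldots,k_a)$ of non-negative integers with $\sum_{j=0}^ak_j=n$ and $\sum_{j=0}^ajk_j=n$. Then $$w_{n,\lambda}(Y)=\sum_{(k_0,\ldots,k_a)\in I_n}q_{(k_0,\ldots,k_a)}\prod_{j=0}^a\big(U^{(j)}(Y)\big)^{k_j}$$ for some $q_{(k_0,\ldots,k_a)}\in\mathbb{Q}_+$.
   Context: Let $a\ge2$ be an integer, $R$ a $\mathbb{Q}$-algebra, $u_0,\ldots,u_a\in R$, and $U(Y)=\sum_{j=0}^au_jY^j\in R[Y]$, with $U^{(j)}$ its $j$-th derivative in $Y$. $\mathbb{Q}_+$ denotes the positive rationals. For each integer $\lambda\ge0$ define polynomials $w_{n,\lambda}(Y)\in R[Y]$ recursively by $w_{0,\lambda}(Y)=1/(\lambda+1)$ and $w_{n,\lambda}(Y)=(\lambda-n+2)U'(Y)w_{n-1,\lambda}(Y)+U(Y)w_{n-1,\lambda}'(Y)$ for $n\ge1$. *)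

theory Defs
  imports "HOL-Computational_Algebra.Polynomial"
begin

definition Q_algebra :: "'a::comm_ring_1 itself \<Rightarrow> bool" where
  "Q_algebra _ \<longleftrightarrow> (\<forall>n::nat. n > 0 \<longrightarrow> (\<exists>y::'a. of_nat n * y = 1))"

text \<open>The structure map Q -> R of a Q-algebra (inverses are unique in a commutative ring).\<close>
definition rat_to :: "rat \<Rightarrow> 'a::comm_ring_1" where
  "rat_to q = (case quotient_of q of (p, d) \<Rightarrow> of_int p * (THE y::'a. of_int d * y = 1))"

text \<open>Formal derivative in Y over an arbitrary commutative ring
  (the library's pder requires no zero divisors).\<close>
definition pder :: "'a::comm_ring_1 poly \<Rightarrow> 'a poly" where
  "pder p = (\<Sum>i\<le>degree p. monom (of_nat i * coeff p i) (i - 1))"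

fun w :: "'a::comm_ring_1 poly \<Rightarrow> nat \<Rightarrow> nat \<Rightarrow> 'a poly" where
  "w U lam 0 = [: rat_to (1 / of_nat (lam + 1)) :]"
| "w U lam (Suc n) =
     smult (of_int (int lam - int (Suc n) + 2)) (pder U * w U lam n) + U * pder (w U lam n)"

text \<open>I_n: sequences (k_0,...,k_a), represented as functions nat => nat vanishing beyond a.\<close>
definition I_set :: "nat \<Rightarrow> nat \<Rightarrow> (nat \<Rightarrow> nat) set" where
  "I_set a n = {k. (\<forall>j>a. k j = 0) \<and> (\<Sum>j\<le>a. k j) = n \<and> (\<Sum>j\<le>a. j * k j) = n}"

end

theory Submission
  imports Defs
begin

text \<open>
  With c = lam - n + 1 > 0 the recursion w(n+1) = c U' w(n) + U w(n)' sends a monomial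
  prod_j (U^(j))^(k_j) to a nonnegative combination of monomials: the factor U' raises k_1,
  and U times the derivative of one factor U^(j) trades it for U^(j+1) and raises k_0.
  Both moves increase sum_j k_j and sum_j j k_j by one, so I_n is mapped into I_(n+1).
  Conversely every k' in I_(n+1) is reached with a positive coefficient: either k'_1 > 0,
  or sum_j k'_j = sum_j j k'_j forces k'_0 > 0 and k'_j > 0 for some j >= 2, and then k'
  comes from U times the derivative of a factor U^(j-1). Collecting equal monomials
  therefore keeps every coefficient positive.
\<close>

lemma coeff_pder: "coeff (pder p) n = of_nat (Suc n) * coeff p (Suc n)"
proof -
  have "coeff (pder p) n = (\<Sum>i\<le>degree p. if i - 1 = n then of_nat i * coeff p i else 0)"
    by (simp add: pder_def coeff_sum coeff_monom)
  also have "\<dots> = (\<Sum>i\<le>degree p. if i = Suc n then of_nat i * coeff p i else 0)"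
    by (rule sum.cong) (auto split: nat.splits simp: diff_Suc)
  also have "\<dots> = of_nat (Suc n) * coeff p (Suc n)"
    by (auto simp: coeff_eq_0)
  finally show ?thesis .
qed

lemma pder_pCons: "pder (pCons c p) = p + pCons 0 (pder p)"
  by (rule poly_eqI) (auto simp: coeff_pder coeff_pCons algebra_simps split: nat.split)

lemma pder_add: "pder (p + q) = pder p + pder q"
  by (rule poly_eqI) (simp add: coeff_pder algebra_simps)

lemma pder_smult: "pder (smult c p) = smult c (pder p)"
  by (rule poly_eqI) (simp add: coeff_pder algebra_simps)

lemma pder_0 [simp]: "pder 0 = 0"
  by (rule poly_eqI) (simp add: coeff_pder)

lemma pder_const [simp]: "pder [:c:] = 0"
  by (rule poly_eqI) (simp add: coeff_pder)

lemma pder_1 [simp]: "pder 1 = 0"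
  by (simp add: one_pCons)

lemma pder_mult: "pder (p * q) = p * pder q + q * pder p"
  by (induct p) (auto simp: pder_add pder_smult pder_pCons algebra_simps)

lemma pder_sum: "pder (\<Sum>x\<in>A. f x) = (\<Sum>x\<in>A. pder (f x))"
  by (induct A rule: infinite_finite_induct) (auto simp: pder_add)

lemma pder_power: "pder (p ^ n) = of_nat n * p ^ (n - 1) * pder p"
proof (induction n)
  case (Suc n)
  then show ?case
    by (cases n) (simp_all add: pder_mult algebra_simps)
qed simp

lemma pder_prod: "pder (prod f S) = (\<Sum>x\<in>S. prod f (S - {x}) * pder (f x))"
proof (induct S rule: infinite_finite_induct)
  case (insert y S)
  have "prod f (insert y S - {x}) = f y * prod f (S - {x})" if "x \<in> S" for x
  proof -
    have "insert y S - {x} = insert y (S - {x})" using insert.hyps that by auto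
    then show ?thesis using insert.hyps by simp
  qed
  then show ?case
    using insert.hyps by (auto simp: pder_mult sum_distrib_left ac_simps intro!: sum.cong)
qed auto

lemma degree_pder: "degree (pder p) \<le> degree p - 1"
  by (rule degree_le) (simp add: coeff_pder coeff_eq_0)

lemma pder_funpow_eq_0: "degree p \<le> m \<Longrightarrow> (pder ^^ Suc m) p = 0"
proof (induction m arbitrary: p)
  case 0
  then show ?case by (auto simp: coeff_pder coeff_eq_0 intro!: poly_eqI)
next
  case (Suc m)
  have "degree (pder p) \<le> m" using Suc.prems degree_pder[of p] by simp
  then show ?case using Suc.IH by (simp add: funpow_Suc_right del: funpow.simps)
qed

lemma smult_sum_right: "smult c (\<Sum>x\<in>A. f x) = (\<Sum>x\<in>A. smult c (f x))"
  by (induct A rule: infinite_finite_induct) (simp_all add: smult_add_right)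

lemma Q_algebra_of_int_inverse:
  assumes "Q_algebra TYPE('a::comm_ring_1)" and "d > 0"
  obtains y :: "'a::comm_ring_1" where "of_int d * y = 1"
  using assms unfolding Q_algebra_def by (metis of_int_of_nat_eq pos_int_cases zero_less_imp_eq_int)

lemma Q_algebra_of_int_mult_cancel:
  fixes x y :: "'a::comm_ring_1"
  assumes "Q_algebra TYPE('a)" and "d > 0" and "of_int d * x = of_int d * y"
  shows "x = y"
proof -
  obtain z :: 'a where z: "of_int d * z = 1" using Q_algebra_of_int_inverse assms(1,2) .
  have "x = z * (of_int d * x)" using z by (simp add: algebra_simps)
  also have "\<dots> = y" using z assms(3) by (simp add: algebra_simps)
  finally show ?thesis .
qed

lemma of_int_mult_rat_to:
  assumes Q: "Q_algebra TYPE('a::comm_ring_1)" and "d > 0" and "r = of_int p / of_int d"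
  shows "of_int d * (rat_to r :: 'a) = of_int p"
proof -
  obtain p' d' where qr: "quotient_of r = (p', d')" by fastforce
  have d': "d' > 0" using quotient_of_denom_pos[OF qr] .
  obtain y :: 'a where y: "of_int d' * y = 1" using Q_algebra_of_int_inverse[OF Q d'] .
  have "(THE y::'a. of_int d' * y = 1) = y"
    using y Q_algebra_of_int_mult_cancel[OF Q d'] by (intro the_equality) simp_all
  then have r: "rat_to r = of_int p' * y" by (simp add: rat_to_def qr)
  have "of_int p / of_int d = (of_int p' / of_int d' :: rat)"
    using assms(3) quotient_of_div[OF qr] by simp
  then have "p * d' = p' * d"
    using \<open>d > 0\<close> d' by (simp add: field_simps flip: of_int_mult)
  then have "of_int d * rat_to r = of_int p * (of_int d' * y)"
    unfolding r by (simp add: algebra_simps flip: of_int_mult)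
  then show ?thesis using y by simp
qed

lemma rat_to_eqI:
  fixes z :: "'a::comm_ring_1"
  assumes Q: "Q_algebra TYPE('a)" and "d > 0" and "r = of_int p / of_int d"
    and "of_int d * z = of_int p"
  shows "rat_to r = z"
  using Q_algebra_of_int_mult_cancel[OF Q \<open>d > 0\<close>] of_int_mult_rat_to[OF assms(1-3)] assms(4)
  by simp

lemma rat_to_add:
  assumes Q: "Q_algebra TYPE('a::comm_ring_1)"
  shows "(rat_to (x + y) :: 'a) = rat_to x + rat_to y"
proof -
  obtain p d p' d' where qxy: "quotient_of x = (p, d)" "quotient_of y = (p', d')" by fastforce
  note pos = quotient_of_denom_pos[OF qxy(1)] quotient_of_denom_pos[OF qxy(2)]
  have x: "of_int d * (rat_to x :: 'a) = of_int p"
    by (rule of_int_mult_rat_to[OF Q pos(1) quotient_of_div[OF qxy(1)]])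
  have y: "of_int d' * (rat_to y :: 'a) = of_int p'"
    by (rule of_int_mult_rat_to[OF Q pos(2) quotient_of_div[OF qxy(2)]])
  show ?thesis
  proof (rule rat_to_eqI[OF Q])
    show "x + y = of_int (p * d' + p' * d) / of_int (d * d')"
      using pos by (simp add: quotient_of_div[OF qxy(1)] quotient_of_div[OF qxy(2)] field_simps)
    have "of_int (d * d') * (rat_to x + rat_to y) =
        of_int d' * (of_int d * rat_to x) + of_int d * (of_int d' * (rat_to y :: 'a))"
      by (simp add: algebra_simps)
    also have "\<dots> = of_int (p * d' + p' * d)"
      unfolding x y by (simp add: algebra_simps)
    finally show "of_int (d * d') * (rat_to x + rat_to y) = (of_int (p * d' + p' * d) :: 'a)" .
  qed (use pos in simp)
qed

lemma rat_to_mult: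
  assumes Q: "Q_algebra TYPE('a::comm_ring_1)"
  shows "(rat_to (x * y) :: 'a) = rat_to x * rat_to y"
proof -
  obtain p d p' d' where qxy: "quotient_of x = (p, d)" "quotient_of y = (p', d')" by fastforce
  note pos = quotient_of_denom_pos[OF qxy(1)] quotient_of_denom_pos[OF qxy(2)]
  have x: "of_int d * (rat_to x :: 'a) = of_int p"
    by (rule of_int_mult_rat_to[OF Q pos(1) quotient_of_div[OF qxy(1)]])
  have y: "of_int d' * (rat_to y :: 'a) = of_int p'"
    by (rule of_int_mult_rat_to[OF Q pos(2) quotient_of_div[OF qxy(2)]])
  show ?thesis
  proof (rule rat_to_eqI[OF Q])
    show "x * y = of_int (p * p') / of_int (d * d')"
      by (simp add: quotient_of_div[OF qxy(1)] quotient_of_div[OF qxy(2)])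
    have "of_int (d * d') * (rat_to x * rat_to y) = (of_int d * rat_to x) * (of_int d' * (rat_to y :: 'a))"
      by (simp add: algebra_simps)
    then show "of_int (d * d') * (rat_to x * rat_to y) = (of_int (p * p') :: 'a)"
      by (simp add: x y)
  qed (use pos in simp)
qed

lemma rat_to_of_int:
  assumes "Q_algebra TYPE('a::comm_ring_1)"
  shows "(rat_to (of_int m) :: 'a) = of_int m"
  by (rule rat_to_eqI[OF assms, of 1 _ m]) simp_all

lemma rat_to_of_nat:
  assumes "Q_algebra TYPE('a::comm_ring_1)"
  shows "(rat_to (of_nat m) :: 'a) = of_nat m"
  using rat_to_of_int[OF assms, of "int m"] by simp

lemma rat_to_sum:
  assumes "Q_algebra TYPE('a::comm_ring_1)"
  shows "(rat_to (\<Sum>x\<in>A. f x) :: 'a) = (\<Sum>x\<in>A. rat_to (f x))"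
proof -
  have "(rat_to 0 :: 'a) = 0" using rat_to_of_int[OF assms, of 0] by simp
  then show ?thesis by (induct A rule: infinite_finite_induct) (simp_all add: rat_to_add[OF assms])
qed

lemma sum_smult_rat_to_regroup:
  fixes c :: "'i \<Rightarrow> rat" and \<kappa> :: "'i \<Rightarrow> 'k" and g :: "'k \<Rightarrow> 'a::comm_ring_1 poly"
  assumes Q: "Q_algebra TYPE('a)" and "finite A" "finite I" "\<kappa> ` A \<subseteq> I"
    and nonneg: "\<forall>i\<in>A. c i \<ge> 0" and cover: "\<forall>k\<in>I. \<exists>i\<in>A. \<kappa> i = k \<and> c i > 0"
  shows "\<exists>q. (\<forall>k\<in>I. q k > 0) \<and>
           (\<Sum>i\<in>A. smult (rat_to (c i)) (g (\<kappa> i))) = (\<Sum>k\<in>I. smult (rat_to (q k)) (g k))"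
proof (intro exI conjI)
  define q where "q k = (\<Sum>i\<in>{i\<in>A. \<kappa> i = k}. c i)" for k
  show "\<forall>k\<in>I. q k > 0"
  proof
    fix k assume "k \<in> I"
    then obtain i where "i \<in> A" "\<kappa> i = k" "c i > 0" using cover by blast
    then show "q k > 0"
      unfolding q_def using \<open>finite A\<close> nonneg by (intro sum_pos2[of _ i]) auto
  qed
  have "(\<Sum>i\<in>A. smult (rat_to (c i)) (g (\<kappa> i))) =
        (\<Sum>k\<in>I. \<Sum>i\<in>{i\<in>A. \<kappa> i = k}. smult (rat_to (c i)) (g (\<kappa> i)))"
    using assms(2-4) by (rule sum.group[symmetric])
  also have "\<dots> = (\<Sum>k\<in>I. smult (rat_to (q k)) (g k))"
    unfolding q_def rat_to_sum[OF Q] smult_sum by (intro sum.cong) auto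
  finally show "(\<Sum>i\<in>A. smult (rat_to (c i)) (g (\<kappa> i))) = (\<Sum>k\<in>I. smult (rat_to (q k)) (g k))" .
qed

definition inc_at :: "nat \<Rightarrow> (nat \<Rightarrow> nat) \<Rightarrow> nat \<Rightarrow> nat" where
  "inc_at m k = k(m := Suc (k m))"

definition dec_at :: "nat \<Rightarrow> (nat \<Rightarrow> nat) \<Rightarrow> nat \<Rightarrow> nat" where
  "dec_at m k = k(m := k m - 1)"

text \<open>\<open>dmonom U a (derive_at j k) = U * (pder ^^ Suc j) U * dmonom U a (dec_at j k)\<close>:
  one factor \<open>(pder ^^ j) U\<close> is differentiated and the result multiplied by \<open>U\<close>.\<close>
definition derive_at :: "nat \<Rightarrow> (nat \<Rightarrow> nat) \<Rightarrow> nat \<Rightarrow> nat" where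
  "derive_at j k = inc_at 0 (inc_at (Suc j) (dec_at j k))"

lemma inc_at_dec_at: "0 < k m \<Longrightarrow> inc_at m (dec_at m k) = k"
  by (auto simp: inc_at_def dec_at_def)

lemma dec_at_inc_at: "dec_at m (inc_at m k) = k"
  by (auto simp: inc_at_def dec_at_def)

lemma sum_mult_inc_at:
  fixes f :: "nat \<Rightarrow> nat"
  assumes "m \<le> a"
  shows "(\<Sum>j\<le>a. f j * inc_at m k j) = (\<Sum>j\<le>a. f j * k j) + f m"
proof -
  have "(\<Sum>j\<le>a. f j * inc_at m k j) = (\<Sum>j\<le>a. f j * k j + (if j = m then f m else 0))"
    by (intro sum.cong) (auto simp: inc_at_def)
  then show ?thesis using assms by (simp add: sum.distrib)
qed

lemma sum_mult_dec_at:
  fixes f :: "nat \<Rightarrow> nat"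
  assumes "m \<le> a" and "0 < k m"
  shows "(\<Sum>j\<le>a. f j * k j) = (\<Sum>j\<le>a. f j * dec_at m k j) + f m"
  using sum_mult_inc_at[OF assms(1), of f "dec_at m k"] by (simp add: inc_at_dec_at[of k m, OF assms(2)])

text \<open>Both sums are written as instances of the weighted sum \<open>\<Sum>j\<le>a. f j * k j\<close>.\<close>
lemma I_set_iff:
  "k \<in> I_set a n \<longleftrightarrow> (\<forall>j>a. k j = 0) \<and> (\<Sum>j\<le>a. 1 * k j) = n \<and> (\<Sum>j\<le>a. j * k j) = n"
  by (simp add: I_set_def)

lemma I_set_0: "I_set a 0 = {\<lambda>_. 0}"
proof -
  have "k = (\<lambda>_. 0)" if k: "k \<in> I_set a 0" for k
  proof
    fix j
    show "k j = 0"
    proof (cases "j \<le> a")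
      case True
      have "k j \<le> (\<Sum>i\<le>a. k i)" using True by (intro member_le_sum) auto
      then show ?thesis using k by (simp add: I_set_def)
    qed (use k in \<open>simp add: I_set_def\<close>)
  qed
  moreover have "(\<lambda>_. 0) \<in> I_set a 0" by (simp add: I_set_def)
  ultimately show ?thesis by blast
qed

lemma finite_I_set: "finite (I_set a n)"
proof (rule finite_subset)
  show "I_set a n \<subseteq> {k. \<forall>j. (j \<in> {..a} \<longrightarrow> k j \<in> {..n}) \<and> (j \<notin> {..a} \<longrightarrow> k j = 0)}"
  proof (intro subsetI CollectI allI conjI impI)
    fix k j assume k: "k \<in> I_set a n" and "j \<in> {..a}"
    then have "k j \<le> (\<Sum>i\<le>a. k i)" by (intro member_le_sum) auto
    then show "k j \<in> {..n}" using k by (simp add: I_set_def)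
  qed (simp add: I_set_def)
qed (rule finite_set_of_finite_funs; simp)

lemma inc_at_1_in_I_set:
  assumes "1 \<le> a" and k: "k \<in> I_set a n"
  shows "inc_at 1 k \<in> I_set a (Suc n)"
proof -
  have "(\<Sum>j\<le>a. f j * inc_at 1 k j) = (\<Sum>j\<le>a. f j * k j) + f 1" for f :: "nat \<Rightarrow> nat"
    using sum_mult_inc_at[OF assms(1)] .
  from this[of "\<lambda>_. 1"] this[of "\<lambda>j. j"] k assms(1) show ?thesis
    unfolding I_set_iff by (simp add: inc_at_def)
qed

lemma derive_at_in_I_set:
  assumes "j < a" and "0 < k j" and k: "k \<in> I_set a n"
  shows "derive_at j k \<in> I_set a (Suc n)"
proof -
  have "(\<Sum>i\<le>a. f i * derive_at j k i) + f j = (\<Sum>i\<le>a. f i * k i) + f 0 + f (Suc j)"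
    for f :: "nat \<Rightarrow> nat"
    using assms(1,2) sum_mult_dec_at[of j a k f] sum_mult_inc_at[of "Suc j" a f "dec_at j k"]
      sum_mult_inc_at[of 0 a f "inc_at (Suc j) (dec_at j k)"]
    unfolding derive_at_def by simp
  from this[of "\<lambda>_. 1"] this[of "\<lambda>i. i"] k assms(1) show ?thesis
    unfolding I_set_iff by (simp add: derive_at_def inc_at_def dec_at_def)
qed

lemma I_set_without_1:
  assumes k: "k \<in> I_set a n" and "0 < n" and "k 1 = 0"
  shows "0 < k 0" and "\<exists>j. 2 \<le> j \<and> j \<le> a \<and> 0 < k j"
proof -
  have "(\<Sum>j\<le>a. j * k j) \<noteq> 0" using k \<open>0 < n\<close> by (simp add: I_set_def)
  then obtain j where j: "j \<le> a" "j * k j \<noteq> 0" using sum.neutral by (metis atMost_iff)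
  moreover have "j \<noteq> 1" using j(2) \<open>k 1 = 0\<close> by auto
  ultimately have "2 \<le> j" "0 < k j" by auto
  with j show "\<exists>j. 2 \<le> j \<and> j \<le> a \<and> 0 < k j" by blast
  show "0 < k 0"
  proof (rule ccontr)
    assume "\<not> 0 < k 0"
    then have "k i \<le> i * k i" for i by (cases i) auto
    moreover have "k j < j * k j" using \<open>2 \<le> j\<close> \<open>0 < k j\<close> by simp
    ultimately have "(\<Sum>i\<le>a. k i) < (\<Sum>i\<le>a. i * k i)"
      using \<open>j \<le> a\<close> by (intro sum_strict_mono_ex1) blast+
    then show False using k by (simp add: I_set_def)
  qed
qed

lemma I_set_Suc_cases:
  assumes k': "k' \<in> I_set a (Suc n)"
  obtains k where "k \<in> I_set a n" and "k' = inc_at 1 k"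
    | k j where "k \<in> I_set a n" and "j < a" and "0 < k j" and "k' = derive_at j k"
proof (cases "k' 1 = 0")
  case False
  have "1 \<le> a" using k' False by (metis I_set_iff not_le)
  have "(\<Sum>j\<le>a. f j * k' j) = (\<Sum>j\<le>a. f j * dec_at 1 k' j) + f 1" for f :: "nat \<Rightarrow> nat"
    using sum_mult_dec_at[OF \<open>1 \<le> a\<close>] False by simp
  from this[of "\<lambda>_. 1"] this[of "\<lambda>j. j"] k' have "dec_at 1 k' \<in> I_set a n"
    unfolding I_set_iff by (simp add: dec_at_def)
  moreover have "k' = inc_at 1 (dec_at 1 k')" using False by (simp add: inc_at_dec_at)
  ultimately show ?thesis by (rule that(1))
next
  case True
  obtain j0 where j0: "2 \<le> j0" "j0 \<le> a" "0 < k' j0" and "0 < k' 0"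
    using I_set_without_1[OF k' _ True] by auto
  define j where "j = j0 - 1"
  have j: "j0 = Suc j" "j < a" "0 < j" using j0 by (auto simp: j_def)
  define k where "k = inc_at j (dec_at j0 (dec_at 0 k'))"
  have "(\<Sum>i\<le>a. f i * k i) + f 0 + f j0 = (\<Sum>i\<le>a. f i * k' i) + f j" for f :: "nat \<Rightarrow> nat"
    using j j0 \<open>0 < k' 0\<close> sum_mult_dec_at[of 0 a k' f] sum_mult_dec_at[of j0 a "dec_at 0 k'" f]
      sum_mult_inc_at[of j a f "dec_at j0 (dec_at 0 k')"]
    by (simp add: k_def dec_at_def)
  from this[of "\<lambda>_. 1"] this[of "\<lambda>i. i"] k' j have "k \<in> I_set a n"
    unfolding I_set_iff by (simp add: k_def inc_at_def dec_at_def)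
  moreover have "0 < k j" by (simp add: k_def inc_at_def)
  moreover have "derive_at j k = k'"
  proof -
    have "0 < dec_at 0 k' j0" using j0 by (simp add: dec_at_def)
    then have "derive_at j k = inc_at 0 (dec_at 0 k')"
      by (simp add: derive_at_def k_def dec_at_inc_at inc_at_dec_at flip: j(1))
    also have "\<dots> = k'" using \<open>0 < k' 0\<close> by (rule inc_at_dec_at)
    finally show ?thesis .
  qed
  ultimately show ?thesis using j(2) that(2) by metis
qed

definition dmonom :: "'a::comm_ring_1 poly \<Rightarrow> nat \<Rightarrow> (nat \<Rightarrow> nat) \<Rightarrow> 'a poly" where
  "dmonom U a k = (\<Prod>j\<le>a. ((pder ^^ j) U) ^ k j)"

lemma dmonom_inc_at:
  assumes "m \<le> a"
  shows "dmonom U a (inc_at m k) = (pder ^^ m) U * dmonom U a k"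
proof -
  have "dmonom U a (inc_at m k) = (\<Prod>j\<le>a. (if j = m then (pder ^^ j) U else 1) * ((pder ^^ j) U) ^ k j)"
    unfolding dmonom_def inc_at_def by (intro prod.cong) auto
  also have "\<dots> = (pder ^^ m) U * dmonom U a k"
    using assms by (simp add: prod.distrib prod.delta dmonom_def)
  finally show ?thesis .
qed

lemma pder_dmonom:
  "pder (dmonom U a k) = (\<Sum>j\<le>a. smult (of_nat (k j)) ((pder ^^ Suc j) U * dmonom U a (dec_at j k)))"
proof -
  let ?f = "\<lambda>j. ((pder ^^ j) U) ^ k j"
  have "pder (dmonom U a k) = (\<Sum>j\<le>a. prod ?f ({..a} - {j}) * pder (?f j))"
    unfolding dmonom_def by (rule pder_prod)
  also have "\<dots> = (\<Sum>j\<le>a. smult (of_nat (k j)) ((pder ^^ Suc j) U * dmonom U a (dec_at j k)))"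
  proof (intro sum.cong refl)
    fix j assume "j \<in> {..a}"
    moreover have "(\<Prod>i\<in>{..a} - {j}. ((pder ^^ i) U) ^ dec_at j k i) = prod ?f ({..a} - {j})"
      by (intro prod.cong) (auto simp: dec_at_def)
    ultimately have "dmonom U a (dec_at j k) = ((pder ^^ j) U) ^ (k j - 1) * prod ?f ({..a} - {j})"
      by (simp add: dmonom_def prod.remove dec_at_def)
    then show "prod ?f ({..a} - {j}) * pder (?f j) =
               smult (of_nat (k j)) ((pder ^^ Suc j) U * dmonom U a (dec_at j k))"
      by (simp add: pder_power of_nat_poly mult_ac)
  qed
  finally show ?thesis .
qed

lemma U_mult_pder_dmonom:
  assumes "degree U \<le> a"
  shows "U * pder (dmonom U a k) =
         (\<Sum>j\<in>{j. j < a \<and> 0 < k j}. smult (of_nat (k j)) (dmonom U a (derive_at j k)))"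
proof -
  have "U * pder (dmonom U a k) =
        (\<Sum>j\<le>a. smult (of_nat (k j)) (U * ((pder ^^ Suc j) U * dmonom U a (dec_at j k))))"
    by (simp add: pder_dmonom sum_distrib_left mult_smult_right)
  also have "\<dots> = (\<Sum>j\<in>{j. j < a \<and> 0 < k j}. smult (of_nat (k j)) (U * ((pder ^^ Suc j) U * dmonom U a (dec_at j k))))"
  proof (intro sum.mono_neutral_right ballI)
    fix j assume "j \<in> {..a} - {j. j < a \<and> 0 < k j}"
    then have "j = a \<or> k j = 0" by auto
    then show "smult (of_nat (k j)) (U * ((pder ^^ Suc j) U * dmonom U a (dec_at j k))) = 0"
      using pder_funpow_eq_0[OF assms] by auto
  qed auto
  also have "\<dots> = (\<Sum>j\<in>{j. j < a \<and> 0 < k j}. smult (of_nat (k j)) (dmonom U a (derive_at j k)))"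
    by (intro sum.cong refl) (simp add: derive_at_def dmonom_inc_at del: funpow.simps)
  finally show ?thesis .
qed

definition positive_expansion :: "'a::comm_ring_1 poly \<Rightarrow> nat \<Rightarrow> nat \<Rightarrow> 'a poly \<Rightarrow> bool" where
  "positive_expansion U a n p \<longleftrightarrow>
     (\<exists>q. (\<forall>k\<in>I_set a n. q k > 0) \<and> p = (\<Sum>k\<in>I_set a n. smult (rat_to (q k)) (dmonom U a k)))"

lemma recursion_step_dmonom:
  fixes U :: "'a::comm_ring_1 poly"
  assumes Q: "Q_algebra TYPE('a)" and "degree U \<le> a" and "1 \<le> a"
  shows "smult (rat_to c) (pder U * smult (rat_to r) (dmonom U a k)) +
           U * pder (smult (rat_to r) (dmonom U a k)) =
         smult (rat_to (c * r)) (dmonom U a (inc_at 1 k)) +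
           (\<Sum>j | j < a \<and> 0 < k j. smult (rat_to (r * of_nat (k j))) (dmonom U a (derive_at j k)))"
proof -
  have "pder U * dmonom U a k = dmonom U a (inc_at 1 k)"
    using dmonom_inc_at[OF \<open>1 \<le> a\<close>, of U k] by simp
  with U_mult_pder_dmonom[OF assms(2)] show ?thesis
    by (simp add: pder_smult mult_smult_right smult_sum_right rat_to_mult[OF Q] rat_to_of_nat[OF Q])
qed

lemma positive_expansion_step:
  fixes U :: "'a::comm_ring_1 poly"
  assumes Q: "Q_algebra TYPE('a)" and "degree U \<le> a" and "1 \<le> a" and "c > 0"
    and "positive_expansion U a n p"
  shows "positive_expansion U a (Suc n) (smult (rat_to c) (pder U * p) + U * pder p)"
proof -
  obtain q where q_pos: "\<forall>k\<in>I_set a n. q k > 0"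
    and p: "p = (\<Sum>k\<in>I_set a n. smult (rat_to (q k)) (dmonom U a k))"
    using assms(5) unfolding positive_expansion_def by blast
  text \<open>The index \<open>(k, None)\<close> stands for the term of \<open>pder U * p\<close> coming from \<open>dmonom U a k\<close>,
    the index \<open>(k, Some j)\<close> for the term where its factor \<open>(pder ^^ j) U\<close> is differentiated.\<close>
  define J where "J k = {j. j < a \<and> 0 < k j}" for k :: "nat \<Rightarrow> nat"
  define A where "A = (SIGMA k:I_set a n. insert None (Some ` J k))"
  define coeff where "coeff = (\<lambda>(k, i). case i of None \<Rightarrow> c * q k | Some j \<Rightarrow> q k * of_nat (k j))"
  define shape where "shape = (\<lambda>(k, i). case i of None \<Rightarrow> inc_at 1 k | Some j \<Rightarrow> derive_at j k)"
  have finite_A: "finite A" unfolding A_def J_def using finite_I_set by auto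
  have expand_term: "smult (rat_to c) (pder U * smult (rat_to (q k)) (dmonom U a k)) +
                U * pder (smult (rat_to (q k)) (dmonom U a k)) =
              (\<Sum>i\<in>insert None (Some ` J k). smult (rat_to (coeff (k, i))) (dmonom U a (shape (k, i))))"
    for k
    unfolding recursion_step_dmonom[OF assms(1-3)] by (simp add: J_def coeff_def shape_def sum.reindex)
  have "smult (rat_to c) (pder U * p) + U * pder p =
        (\<Sum>k\<in>I_set a n. smult (rat_to c) (pder U * smult (rat_to (q k)) (dmonom U a k)) +
                U * pder (smult (rat_to (q k)) (dmonom U a k)))"
    by (simp add: p pder_sum sum_distrib_left smult_sum_right sum.distrib)
  also have "\<dots> = (\<Sum>k\<in>I_set a n. \<Sum>i\<in>insert None (Some ` J k).
                      smult (rat_to (coeff (k, i))) (dmonom U a (shape (k, i))))"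
    by (simp only: expand_term)
  also have "\<dots> = (\<Sum>(k, i)\<in>A. smult (rat_to (coeff (k, i))) (dmonom U a (shape (k, i))))"
    unfolding A_def by (rule sum.Sigma) (auto simp: finite_I_set J_def)
  finally have expansion: "smult (rat_to c) (pder U * p) + U * pder p =
      (\<Sum>i\<in>A. smult (rat_to (coeff i)) (dmonom U a (shape i)))"
    by (simp add: case_prod_beta')
  have shape_A: "shape ` A \<subseteq> I_set a (Suc n)"
    using inc_at_1_in_I_set[OF \<open>1 \<le> a\<close>] derive_at_in_I_set
    by (auto simp: A_def J_def shape_def)
  have coeff_nonneg: "\<forall>i\<in>A. coeff i \<ge> 0"
    using q_pos \<open>c > 0\<close> by (auto simp: A_def coeff_def less_imp_le)
  have cover: "\<forall>k'\<in>I_set a (Suc n). \<exists>i\<in>A. shape i = k' \<and> coeff i > 0"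
  proof
    fix k' assume "k' \<in> I_set a (Suc n)"
    then show "\<exists>i\<in>A. shape i = k' \<and> coeff i > 0"
    proof (cases rule: I_set_Suc_cases)
      case (1 k)
      then show ?thesis using q_pos \<open>c > 0\<close>
        by (intro bexI[of _ "(k, None)"]) (auto simp: A_def shape_def coeff_def)
    next
      case (2 k j)
      then show ?thesis using q_pos
        by (intro bexI[of _ "(k, Some j)"]) (auto simp: A_def J_def shape_def coeff_def)
    qed
  qed
  show ?thesis
    using sum_smult_rat_to_regroup[OF Q finite_A finite_I_set shape_A coeff_nonneg cover, of "dmonom U a"]
    unfolding positive_expansion_def expansion .
qed

lemma positive_expansion_w:
  fixes U :: "'a::comm_ring_1 poly"
  assumes Q: "Q_algebra TYPE('a)" and "degree U \<le> a" and "1 \<le> a"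
  shows "n \<le> lam + 1 \<Longrightarrow> positive_expansion U a n (w U lam n)"
proof (induction n)
  case 0
  have "w U lam 0 = smult (rat_to (1 / of_nat (lam + 1))) (dmonom U a (\<lambda>_. 0))"
    by (simp add: dmonom_def smult_one)
  then show ?case
    unfolding positive_expansion_def I_set_0 by (intro exI[of _ "\<lambda>_. 1 / of_nat (lam + 1)"]) simp
next
  case (Suc n)
  define c :: rat where "c = of_int (int lam - int (Suc n) + 2)"
  have "c > 0" using Suc.prems by (simp add: c_def)
  have "rat_to c = (of_int (int lam - int (Suc n) + 2) :: 'a)"
    unfolding c_def by (rule rat_to_of_int[OF Q])
  then have "w U lam (Suc n) = smult (rat_to c) (pder U * w U lam n) + U * pder (w U lam n)"
    by simp
  then show ?case
    using positive_expansion_step[OF Q assms(2,3) \<open>c > 0\<close>] Suc by simp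
qed

theorem mainTheorem6:
  fixes U :: "'a::comm_ring_1 poly" and a lam n :: nat
  assumes "Q_algebra TYPE('a)"
    and "a \<ge> 2"
    and "degree U \<le> a"
    and "1 \<le> n" and "n \<le> lam + 1"
  shows "\<exists>q :: (nat \<Rightarrow> nat) \<Rightarrow> rat. (\<forall>k\<in>I_set a n. q k > 0) \<and>
           w U lam n = (\<Sum>k\<in>I_set a n. smult (rat_to (q k)) (\<Prod>j\<le>a. ((pder ^^ j) U) ^ (k j)))"
  using positive_expansion_w[OF assms(1,3) _ assms(5)] assms(2)
  unfolding positive_expansion_def dmonom_def by simp

end
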